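(* Let $G,H$ be graphs, and let $\mathcal{F}$ be a family of graphs. If $m$ is an integer satisfying $m\ge 4|E(H)|\Delta$, where $\Delta$ is the maximum degree of $G$, then there exists a subgraph $G'\subseteq G$ which is $\mathcal{F}$-free such that \[\mathcal{N}_H(G')\ge \tfrac12\, \mathrm{ex}(m,H, \mathcal{L}(\mathcal{F}))\, m^{-v(H)}\cdot \mathcal{N}_H(G).\]
   Context: Graphs here are unrooted. For graphs $F,F'$, a map $\phi:V(F)\to V(F')$ is a local isomorphism if (a) $\phi$ is surjective, (b) for every edge $e\in E(F)$, $\phi(e)=\{\phi(x):x\in e\}\in E(F')$, and (c) for every two distinct edges $e,f\in E(F)$ with $e\cap f\ne\emptyset$, $\phi(e)\ne\phi(f)$. $\mathcal{L}(\mathcal{F})$ is the set of all graphs $F'$ for which some $F\in\mathcal{F}$ has a local isomorphism $V(F)\to V(F')$. $\mathcal{N}_H(G)$ is the number of subgraphs of $G$ isomorphic to $H$; a graph is $\mathcal{F}$-free if it contains no subgraph isomorphic to a member of $\mathcal{F}$; $\mathrm{ex}(m,H,\mathcal{F}')$ is the maximum of $\mathcal{N}_H(M)$ over $\mathcal{F}'$-free $m$-vertex graphs $M$. *)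

theory Defs
  imports Complex_Main
begin

type_synonym graph = "nat set \<times> nat set set"

definition verts :: "graph \<Rightarrow> nat set" where "verts G = fst G"
definition edges :: "graph \<Rightarrow> nat set set" where "edges G = snd G"

definition is_graph :: "graph \<Rightarrow> bool" where
  "is_graph G \<longleftrightarrow> finite (verts G) \<and>
     (\<forall>e\<in>edges G. e \<subseteq> verts G \<and> card e = 2)"

definition subgraph :: "graph \<Rightarrow> graph \<Rightarrow> bool" where
  "subgraph S G \<longleftrightarrow> is_graph S \<and> verts S \<subseteq> verts G \<and> edges S \<subseteq> edges G"

definition isomorphic :: "graph \<Rightarrow> graph \<Rightarrow> bool" where
  "isomorphic S H \<longleftrightarrow> (\<exists>f. bij_betw f (verts S) (verts H) \<and>
      edges H = (\<lambda>e. f ` e) ` edges S)"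

definition count_copies :: "graph \<Rightarrow> graph \<Rightarrow> nat" where
  "count_copies H G = card {S. subgraph S G \<and> isomorphic S H}"

definition free :: "graph set \<Rightarrow> graph \<Rightarrow> bool" where
  "free \<F> G \<longleftrightarrow> \<not> (\<exists>S F. subgraph S G \<and> F \<in> \<F> \<and> isomorphic S F)"

definition local_iso :: "(nat \<Rightarrow> nat) \<Rightarrow> graph \<Rightarrow> graph \<Rightarrow> bool" where
  "local_iso \<phi> F F' \<longleftrightarrow> \<phi> ` verts F = verts F' \<and>
     (\<forall>e\<in>edges F. \<phi> ` e \<in> edges F') \<and>
     (\<forall>e\<in>edges F. \<forall>f\<in>edges F. e \<noteq> f \<and> e \<inter> f \<noteq> {} \<longrightarrow> \<phi> ` e \<noteq> \<phi> ` f)"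

definition local_family :: "graph set \<Rightarrow> graph set" where
  "local_family \<F> = {F'. is_graph F' \<and> (\<exists>F\<in>\<F>. \<exists>\<phi>. local_iso \<phi> F F')}"

text \<open>Maximum degree (0 for the graph with no vertices).\<close>
definition max_degree :: "graph \<Rightarrow> nat" where
  "max_degree G = Max (insert 0 ((\<lambda>v. card {e\<in>edges G. v \<in> e}) ` verts G))"

text \<open>By isomorphism invariance we may take the vertex set {0..<m}.
  Convention: 0 if there is no such graph (Sup of the empty nat set).\<close>
definition ex :: "nat \<Rightarrow> graph \<Rightarrow> graph set \<Rightarrow> nat" where
  "ex m H \<F>' = Sup {count_copies H M | M. is_graph M \<and> verts M = {0..<m} \<and> free \<F>' M}"

end

theory Submission
  imports Defs "HOL-Library.FuncSet"
begin

text \<open>Fix an \<L>(\<F>)-free graph M on {0..<m} with ex(m, H, \<L>(\<F>)) copies of H and consider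
  all maps \<phi> from V(G) to {0..<m}. Keep an edge of G if \<phi> maps it onto an edge of M and no
  adjacent edge has the same image. On every subgraph of the kept graph, \<phi> is a local
  isomorphism onto its image in M; hence the kept graph is \<F>-free. A copy S of H in G is
  mapped onto some copy of H in M by at least N_H(M) m^(v(G) - v(H)) maps. For a fixed edge of
  S and one of its at most 2\<Delta> adjacent edges, at most a 1/m fraction of these maps identify
  the two, so since m \<ge> 4 |E(H)| \<Delta> at least half of them keep all of S. Double counting
  pairs (S, \<phi>) and taking the best \<phi> gives the bound.\<close>

lemma verts_pair [simp]: "verts (V, E) = V"
  by (simp add: verts_def)

lemma edges_pair [simp]: "edges (V, E) = E"
  by (simp add: edges_def)

lemma graph_eqI: "verts S = verts T \<Longrightarrow> edges S = edges T \<Longrightarrow> S = T"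
  by (simp add: verts_def edges_def prod_eq_iff)

lemma is_graph_edge_subset: "is_graph G \<Longrightarrow> e \<in> edges G \<Longrightarrow> e \<subseteq> verts G"
  by (simp add: is_graph_def)

lemma is_graph_card_edge: "is_graph G \<Longrightarrow> e \<in> edges G \<Longrightarrow> card e = 2"
  by (simp add: is_graph_def)

lemma finite_edges: "is_graph G \<Longrightarrow> finite (edges G)"
  unfolding is_graph_def by (meson Pow_iff finite_Pow_iff finite_subset subsetI)

lemma subgraph_empty_graph: "is_graph G \<Longrightarrow> subgraph ({}, {}) G"
  by (simp add: subgraph_def is_graph_def)

lemma free_empty_graph: "\<forall>F\<in>\<F>. verts F \<noteq> {} \<Longrightarrow> free \<F> ({}, {})"
  by (auto simp: free_def subgraph_def isomorphic_def bij_betw_def)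

lemma finite_copies:
  assumes "is_graph G"
  shows "finite {S. subgraph S G \<and> isomorphic S H}"
proof (rule finite_subset)
  show "{S. subgraph S G \<and> isomorphic S H} \<subseteq> Pow (verts G) \<times> Pow (edges G)"
    by (auto simp: subgraph_def verts_def edges_def)
  show "finite (Pow (verts G) \<times> Pow (edges G))"
    using assms finite_edges[OF assms] by (simp add: is_graph_def)
qed

lemma isomorphic_refl: "isomorphic S S"
  unfolding isomorphic_def by (rule exI[of _ id]) simp

lemma isomorphic_sym:
  assumes "is_graph S" "isomorphic S T"
  shows "isomorphic T S"
proof -
  obtain g where g: "bij_betw g (verts S) (verts T)" "edges T = (\<lambda>e. g ` e) ` edges S"
    using assms(2) unfolding isomorphic_def by blast
  have "inv_into (verts S) g ` g ` e = e" if "e \<in> edges S" for e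
    using g(1) is_graph_edge_subset[OF assms(1) that] by (simp add: bij_betw_def)
  then have "edges S = (\<lambda>e. inv_into (verts S) g ` e) ` edges T"
    by (simp add: g(2) image_image)
  then show ?thesis
    unfolding isomorphic_def using bij_betw_inv_into[OF g(1)] by blast
qed

lemma isomorphic_trans:
  assumes "isomorphic S T" "isomorphic T U"
  shows "isomorphic S U"
proof -
  obtain g where g: "bij_betw g (verts S) (verts T)" "edges T = (\<lambda>e. g ` e) ` edges S"
    using assms(1) unfolding isomorphic_def by blast
  obtain h where h: "bij_betw h (verts T) (verts U)" "edges U = (\<lambda>e. h ` e) ` edges T"
    using assms(2) unfolding isomorphic_def by blast
  have "edges U = (\<lambda>e. (h \<circ> g) ` e) ` edges S"
    by (simp add: g(2) h(2) image_image image_comp)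
  then show ?thesis
    unfolding isomorphic_def using bij_betw_trans[OF g(1) h(1)] by blast
qed

lemma isomorphic_card_verts: "isomorphic S H \<Longrightarrow> card (verts S) = card (verts H)"
  unfolding isomorphic_def by (metis bij_betw_same_card)

lemma isomorphic_card_edges:
  assumes "is_graph S" "isomorphic S H"
  shows "card (edges S) = card (edges H)"
proof -
  obtain g where g: "bij_betw g (verts S) (verts H)" "edges H = (\<lambda>e. g ` e) ` edges S"
    using assms(2) unfolding isomorphic_def by blast
  have "inj_on (\<lambda>e. g ` e) (edges S)"
    using g(1) is_graph_edge_subset[OF assms(1)]
    by (intro inj_onI) (metis bij_betw_def inj_on_image_eq_iff)
  then show ?thesis
    by (simp add: g(2) card_image)
qed

lemma count_copies_empty_pattern:
  assumes "is_graph H" "verts H = {}" "is_graph G"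
  shows "count_copies H G = 1"
proof -
  have "{S. subgraph S G \<and> isomorphic S H} = {({}, {})}"
  proof (intro equalityI subsetI)
    fix S assume S: "S \<in> {S. subgraph S G \<and> isomorphic S H}"
    then have "verts S = {}" and "is_graph S"
      using assms(2) by (auto simp: isomorphic_def bij_betw_def subgraph_def)
    then have "edges S = {}"
      using is_graph_edge_subset is_graph_card_edge by fastforce
    with \<open>verts S = {}\<close> show "S \<in> {({}, {})}"
      by (simp add: graph_eqI)
  next
    have "edges H = {}"
      using assms(1,2) is_graph_edge_subset is_graph_card_edge by fastforce
    then show "S \<in> {S. subgraph S G \<and> isomorphic S H}" if "S \<in> {({}, {})}" for S
      using that subgraph_empty_graph[OF assms(3)] assms(2)
      by (auto simp: isomorphic_def bij_betw_def)
  qed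
  then show ?thesis
    by (simp add: count_copies_def)
qed

lemma ex_attained:
  assumes "ex m H \<F>' > 0"
  obtains M where "is_graph M" "verts M = {0..<m}" "free \<F>' M" "count_copies H M = ex m H \<F>'"
proof -
  let ?Ms = "{M. is_graph M \<and> verts M = {0..<m} \<and> free \<F>' M}"
  have ex_eq: "ex m H \<F>' = Sup (count_copies H ` ?Ms)"
    unfolding ex_def by (simp add: image_Collect)
  have "?Ms \<subseteq> {{0..<m}} \<times> Pow (Pow {0..<m})"
    by (force simp: is_graph_def verts_def edges_def)
  then have "finite ?Ms"
    by (rule finite_subset) (simp add: finite_cartesian_product)
  then have fin: "finite (count_copies H ` ?Ms)"
    by simp
  have ne: "count_copies H ` ?Ms \<noteq> {}"
    using assms ex_eq by (metis Sup_nat_empty less_irrefl)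
  have "ex m H \<F>' \<in> count_copies H ` ?Ms"
    using Max_in[OF fin ne] cSup_eq_Max[OF fin ne] ex_eq by simp
  then show ?thesis
    using that by auto
qed

definition graph_image :: "(nat \<Rightarrow> nat) \<Rightarrow> graph \<Rightarrow> graph" where
  "graph_image \<phi> S = (\<phi> ` verts S, (\<lambda>e. \<phi> ` e) ` edges S)"

lemma local_family_if_local_iso:
  assumes "F \<in> \<F>" "is_graph S" "isomorphic S F" "local_iso \<phi> S F'" "is_graph F'"
  shows "F' \<in> local_family \<F>"
proof -
  obtain g where g: "bij_betw g (verts S) (verts F)" "edges F = (\<lambda>e. g ` e) ` edges S"
    using assms(3) unfolding isomorphic_def by blast
  define \<psi> where "\<psi> = \<phi> \<circ> inv_into (verts S) g"
  have \<psi>_image: "\<psi> ` g ` A = \<phi> ` A" if "A \<subseteq> verts S" for A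
  proof -
    have "inv_into (verts S) g ` g ` A = A"
      using g(1) that by (simp add: bij_betw_def)
    then show ?thesis
      unfolding \<psi>_def by (metis image_comp)
  qed
  have "local_iso \<psi> F F'"
    unfolding local_iso_def
  proof (intro conjI ballI impI)
    show "\<psi> ` verts F = verts F'"
      using \<psi>_image[of "verts S"] g(1) assms(4) by (simp add: bij_betw_def local_iso_def)
    show "\<psi> ` e \<in> edges F'" if e: "e \<in> edges F" for e
    proof -
      obtain a where "a \<in> edges S" "e = g ` a"
        using e by (auto simp: g(2))
      then show ?thesis
        using assms(4) \<psi>_image[OF is_graph_edge_subset[OF assms(2)]] by (simp add: local_iso_def)
    qed
  next
    fix e f assume ef: "e \<in> edges F" "f \<in> edges F" "e \<noteq> f \<and> e \<inter> f \<noteq> {}"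
    then obtain a b where ab: "a \<in> edges S" "b \<in> edges S" "e = g ` a" "f = g ` b"
      by (auto simp: g(2))
    have "a \<subseteq> verts S" "b \<subseteq> verts S"
      using ab(1,2) assms(2) is_graph_edge_subset by auto
    moreover from this have "g ` a \<inter> g ` b = g ` (a \<inter> b)"
      using g(1) by (metis bij_betw_def inj_on_image_Int)
    ultimately have "a \<noteq> b" "a \<inter> b \<noteq> {}"
      using ab ef by auto
    then have "\<phi> ` a \<noteq> \<phi> ` b"
      using ab(1,2) assms(4) unfolding local_iso_def by blast
    then show "\<psi> ` e \<noteq> \<psi> ` f"
      using \<psi>_image ab \<open>a \<subseteq> verts S\<close> \<open>b \<subseteq> verts S\<close> by simp
  qed
  then show ?thesis
    using assms(1,5) unfolding local_family_def by blast
qed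

definition pullback_edges :: "graph \<Rightarrow> graph \<Rightarrow> (nat \<Rightarrow> nat) \<Rightarrow> nat set set" where
  "pullback_edges G M \<phi> = {e \<in> edges G. \<phi> ` e \<in> edges M \<and>
     (\<forall>f\<in>edges G. e \<noteq> f \<and> e \<inter> f \<noteq> {} \<longrightarrow> \<phi> ` e \<noteq> \<phi> ` f)}"

definition pullback_graph :: "graph \<Rightarrow> graph \<Rightarrow> (nat \<Rightarrow> nat) \<Rightarrow> graph" where
  "pullback_graph G M \<phi> = (verts G, pullback_edges G M \<phi>)"

lemma subgraph_pullback_graph: "is_graph G \<Longrightarrow> subgraph (pullback_graph G M \<phi>) G"
  by (auto simp: pullback_graph_def pullback_edges_def subgraph_def is_graph_def)

lemma local_iso_pullback_graph:
  assumes "subgraph S (pullback_graph G M \<phi>)"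
  shows "local_iso \<phi> S (graph_image \<phi> S)"
proof -
  have "edges S \<subseteq> pullback_edges G M \<phi>"
    using assms by (simp add: subgraph_def pullback_graph_def)
  then have "\<phi> ` e \<noteq> \<phi> ` f" if "e \<in> edges S" "f \<in> edges S" "e \<noteq> f" "e \<inter> f \<noteq> {}" for e f
    using that unfolding pullback_edges_def by blast
  then show ?thesis
    by (simp add: local_iso_def graph_image_def)
qed

lemma subgraph_graph_image_pullback_graph:
  assumes "subgraph S (pullback_graph G M \<phi>)" "is_graph M" "\<phi> ` verts G \<subseteq> verts M"
  shows "subgraph (graph_image \<phi> S) M"
proof -
  have S: "is_graph S" "verts S \<subseteq> verts G" "edges S \<subseteq> pullback_edges G M \<phi>"
    using assms(1) by (auto simp: subgraph_def pullback_graph_def)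
  have edges_sub: "edges (graph_image \<phi> S) \<subseteq> edges M"
    using S(3) by (auto simp: graph_image_def pullback_edges_def)
  have "is_graph (graph_image \<phi> S)"
    unfolding is_graph_def
  proof (intro conjI ballI)
    show "finite (verts (graph_image \<phi> S))"
      using S(1) by (simp add: graph_image_def is_graph_def)
    fix e' assume e': "e' \<in> edges (graph_image \<phi> S)"
    then show "card e' = 2"
      using edges_sub assms(2) is_graph_card_edge by blast
    from e' obtain e where "e \<in> edges S" "e' = \<phi> ` e"
      by (auto simp: graph_image_def)
    then show "e' \<subseteq> verts (graph_image \<phi> S)"
      using is_graph_edge_subset[OF S(1)] by (auto simp: graph_image_def)
  qed
  then show ?thesis
    using S(2) assms(3) edges_sub by (auto simp: subgraph_def graph_image_def)
qed

lemma free_pullback_graph: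
  assumes "is_graph M" "free (local_family \<F>) M" "\<phi> ` verts G \<subseteq> verts M"
  shows "free \<F> (pullback_graph G M \<phi>)"
  unfolding free_def
proof
  assume "\<exists>S F. subgraph S (pullback_graph G M \<phi>) \<and> F \<in> \<F> \<and> isomorphic S F"
  then obtain S F where S: "subgraph S (pullback_graph G M \<phi>)" "F \<in> \<F>" "isomorphic S F"
    by blast
  have image_sub: "subgraph (graph_image \<phi> S) M"
    using subgraph_graph_image_pullback_graph[OF S(1) assms(1,3)] .
  have "is_graph S" "is_graph (graph_image \<phi> S)"
    using S(1) image_sub by (simp_all add: subgraph_def)
  then have "graph_image \<phi> S \<in> local_family \<F>"
    using local_family_if_local_iso[OF S(2) _ S(3) local_iso_pullback_graph[OF S(1)]] by blast
  then show False
    using assms(2) image_sub isomorphic_refl unfolding free_def by blast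
qed

definition embedding_maps :: "graph \<Rightarrow> graph \<Rightarrow> graph \<Rightarrow> nat \<Rightarrow> (nat \<Rightarrow> nat) set" where
  "embedding_maps G S M m = {\<phi> \<in> verts G \<rightarrow>\<^sub>E {0..<m}.
     inj_on \<phi> (verts S) \<and> (\<forall>e\<in>edges S. \<phi> ` e \<in> edges M)}"

lemma finite_embedding_maps: "is_graph G \<Longrightarrow> finite (embedding_maps G S M m)"
  unfolding embedding_maps_def
  by (rule finite_subset[of _ "verts G \<rightarrow>\<^sub>E {0..<m}"]) (auto simp: is_graph_def finite_PiE)

lemma embedding_map_onto_copy:
  assumes "verts M = {0..<m}" "subgraph S G" "isomorphic S H" "subgraph T M" "isomorphic T H"
    and \<chi>: "\<chi> \<in> verts G - verts S \<rightarrow>\<^sub>E {0..<m}"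
  obtains \<phi> where "\<phi> \<in> embedding_maps G S M m" "graph_image \<phi> S = T"
    "restrict \<phi> (verts G - verts S) = \<chi>"
proof -
  have S: "is_graph S" "verts S \<subseteq> verts G"
    using assms(2) by (auto simp: subgraph_def)
  have "isomorphic S T"
    using assms(3-5) by (auto intro: isomorphic_trans isomorphic_sym simp: subgraph_def)
  then obtain g where g: "bij_betw g (verts S) (verts T)" "edges T = (\<lambda>e. g ` e) ` edges S"
    unfolding isomorphic_def by blast
  define \<phi> where "\<phi> x = (if x \<in> verts S then g x else \<chi> x)" for x
  have on_edges: "\<phi> ` e = g ` e" if "e \<in> edges S" for e
    using is_graph_edge_subset[OF S(1) that] by (auto simp: \<phi>_def)
  have "\<phi> \<in> embedding_maps G S M m"
    unfolding embedding_maps_def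
  proof (intro CollectI conjI PiE_I ballI)
    have "g ` verts S \<subseteq> {0..<m}"
      using g(1) assms(1,4) by (auto simp: bij_betw_def subgraph_def)
    then show "\<phi> x \<in> {0..<m}" if "x \<in> verts G" for x
      using that \<chi> by (auto simp: \<phi>_def)
    show "\<phi> x = undefined" if "x \<notin> verts G" for x
      using that \<chi> S(2) by (auto simp: \<phi>_def)
    show "inj_on \<phi> (verts S)"
      using g(1) by (simp add: \<phi>_def bij_betw_def inj_on_def)
    show "\<phi> ` e \<in> edges M" if "e \<in> edges S" for e
      using that on_edges g(2) assms(4) by (auto simp: subgraph_def)
  qed
  moreover have "graph_image \<phi> S = T"
    using g on_edges by (intro graph_eqI) (auto simp: graph_image_def \<phi>_def bij_betw_def)
  moreover have "restrict \<phi> (verts G - verts S) = \<chi>"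
    using \<chi> by (auto simp: \<phi>_def restrict_def PiE_def extensional_def)
  ultimately show ?thesis
    using that by blast
qed

lemma card_embedding_maps_ge:
  assumes "is_graph G" "verts M = {0..<m}" "subgraph S G" "isomorphic S H"
  shows "count_copies H M * m ^ card (verts G - verts S) \<le> card (embedding_maps G S M m)"
proof -
  let ?C = "{T. subgraph T M \<and> isomorphic T H}"
  let ?P = "verts G - verts S \<rightarrow>\<^sub>E {0..<m}"
  let ?f = "\<lambda>\<phi>. (graph_image \<phi> S, restrict \<phi> (verts G - verts S))"
  have "?C \<times> ?P \<subseteq> ?f ` embedding_maps G S M m"
  proof clarify
    fix T \<chi> assume T: "subgraph T M" "isomorphic T H" and \<chi>: "\<chi> \<in> ?P"
    obtain \<phi> where "\<phi> \<in> embedding_maps G S M m" "graph_image \<phi> S = T"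
      "restrict \<phi> (verts G - verts S) = \<chi>"
      by (rule embedding_map_onto_copy[OF assms(2-4) T \<chi>])
    then show "(T, \<chi>) \<in> ?f ` embedding_maps G S M m"
      by force
  qed
  then have "card (?C \<times> ?P) \<le> card (embedding_maps G S M m)"
    by (rule surj_card_le[OF finite_embedding_maps[OF assms(1)]])
  moreover have "card (?C \<times> ?P) = count_copies H M * m ^ card (verts G - verts S)"
    using assms(1) by (simp add: card_cartesian_product count_copies_def card_PiE is_graph_def)
  ultimately show ?thesis
    by simp
qed

lemma embedding_maps_update:
  assumes "subgraph S G" "\<phi> \<in> embedding_maps G S M m" "c \<in> verts G - verts S" "j < m"
  shows "\<phi>(c := j) \<in> embedding_maps G S M m"
proof -
  have \<phi>: "\<phi> \<in> verts G \<rightarrow>\<^sub>E {0..<m}" "inj_on \<phi> (verts S)" "\<forall>e\<in>edges S. \<phi> ` e \<in> edges M"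
    using assms(2) by (simp_all add: embedding_maps_def)
  have "\<phi>(c := j) \<in> verts G \<rightarrow>\<^sub>E {0..<m}"
    using PiE_fun_upd[OF _ \<phi>(1), of j c] assms(3,4) by (simp add: insert_absorb)
  moreover have "inj_on (\<phi>(c := j)) (verts S)"
  proof (subst inj_on_cong)
    show "(\<phi>(c := j)) x = \<phi> x" if "x \<in> verts S" for x
      using that assms(3) by auto
  qed (rule \<phi>(2))
  moreover have "\<phi>(c := j) ` e = \<phi> ` e" if "e \<in> edges S" for e
  proof -
    have "is_graph S"
      using assms(1) by (simp add: subgraph_def)
    then have "c \<notin> e"
      using assms(3) is_graph_edge_subset[OF _ that] by blast
    then show ?thesis
      by (intro image_cong) auto
  qed
  ultimately show ?thesis
    using \<phi>(3) by (simp add: embedding_maps_def)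
qed

text \<open>Updating the value at c is injective on the maps identifying c with b, as the old
  value at c can be read off at b.\<close>

lemma card_coinciding_le:
  assumes "finite A" "b \<noteq> c" "\<And>\<phi> j. \<phi> \<in> A \<Longrightarrow> j \<in> J \<Longrightarrow> \<phi>(c := j) \<in> A"
  shows "card J * card {\<phi> \<in> A. \<phi> c = \<phi> b} \<le> card A"
proof -
  let ?B = "{\<phi> \<in> A. \<phi> c = \<phi> b}"
  have "inj_on (\<lambda>(\<phi>, j). \<phi>(c := j)) (?B \<times> J)"
  proof (rule inj_onI, clarify)
    fix \<phi> j \<psi> k assume "\<phi> c = \<phi> b" "\<psi> c = \<psi> b" and eq: "\<phi>(c := j) = \<psi>(c := k)"
    moreover have "\<phi> b = \<psi> b"
      using fun_cong[OF eq, of b] assms(2) by simp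
    ultimately have "\<phi> c = \<psi> c"
      by simp
    then show "\<phi> = \<psi> \<and> j = k"
      using eq by (metis fun_upd_triv fun_upd_upd fun_upd_same)
  qed
  moreover have "(\<lambda>(\<phi>, j). \<phi>(c := j)) ` (?B \<times> J) \<subseteq> A"
    using assms(3) by auto
  ultimately have "card (?B \<times> J) \<le> card A"
    using card_inj_on_le assms(1) by blast
  then show ?thesis
    by (simp add: card_cartesian_product mult.commute)
qed

lemma card_2_obtain:
  assumes "card e = 2" "a \<in> e"
  obtains b where "e = {a, b}" "a \<noteq> b"
proof -
  have "card (e - {a}) = 1"
    using assms by (simp add: card_Diff_singleton)
  then obtain b where "e - {a} = {b}"
    by (rule card_1_singletonE)
  then show ?thesis
    using that assms(2) by blast
qed

lemma adjacent_edges_obtain: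
  assumes "card e = 2" "card f = 2" "e \<noteq> f" "e \<inter> f \<noteq> {}"
  obtains a b c where "e = {a, b}" "f = {a, c}" "a \<noteq> b" "a \<noteq> c" "b \<noteq> c"
proof -
  obtain a where a: "a \<in> e" "a \<in> f"
    using assms(4) by blast
  obtain b where b: "e = {a, b}" "a \<noteq> b"
    using card_2_obtain[OF assms(1) a(1)] .
  obtain c where c: "f = {a, c}" "a \<noteq> c"
    using card_2_obtain[OF assms(2) a(2)] .
  have "b \<noteq> c"
    using assms(3) b(1) c(1) by auto
  then show ?thesis
    using that b c by simp
qed

lemma card_edge_collisions_le:
  assumes "is_graph G" "is_graph M" "subgraph S G"
    and "e \<in> edges S" "f \<in> edges G" "e \<noteq> f" "e \<inter> f \<noteq> {}"
  shows "m * card {\<phi> \<in> embedding_maps G S M m. \<phi> ` e = \<phi> ` f} \<le> card (embedding_maps G S M m)"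
proof -
  let ?A = "embedding_maps G S M m"
  have S: "is_graph S" "edges S \<subseteq> edges G"
    using assms(3) by (auto simp: subgraph_def)
  have "card e = 2" "card f = 2"
    using is_graph_card_edge[OF assms(1)] assms(4,5) S(2) by blast+
  then obtain a b c where abc: "e = {a, b}" "f = {a, c}" "a \<noteq> b" "a \<noteq> c" "b \<noteq> c"
    using adjacent_edges_obtain assms(6,7) by blast
  have b: "b \<in> verts S"
    using is_graph_edge_subset[OF S(1) assms(4)] abc(1) by auto
  have "{\<phi> \<in> ?A. \<phi> ` e = \<phi> ` f} \<subseteq> {\<phi> \<in> ?A. \<phi> c = \<phi> b}"
  proof clarify
    fix \<phi> assume \<phi>: "\<phi> \<in> ?A" "\<phi> ` e = \<phi> ` f"
    have "card (\<phi> ` e) = 2"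
      using \<phi>(1) assms(2,4) is_graph_card_edge by (auto simp: embedding_maps_def)
    then show "\<phi> c = \<phi> b"
      using \<phi>(2) abc by (auto simp: doubleton_eq_iff)
  qed
  then have "m * card {\<phi> \<in> ?A. \<phi> ` e = \<phi> ` f} \<le> m * card {\<phi> \<in> ?A. \<phi> c = \<phi> b}"
    using finite_embedding_maps[OF assms(1)] by (simp add: card_mono)
  also have "\<dots> \<le> card ?A"
  proof (cases "c \<in> verts S")
    case True
    then have "{\<phi> \<in> ?A. \<phi> c = \<phi> b} = {}"
      using b abc(5) by (auto simp: embedding_maps_def inj_on_def)
    then show ?thesis
      by (simp only: card.empty mult_0_right zero_le)
  next
    case False
    have "c \<in> verts G"
      using is_graph_edge_subset[OF assms(1,5)] abc(2) by auto
    then show ?thesis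
      using card_coinciding_le[OF finite_embedding_maps[OF assms(1)] abc(5), where J = "{0..<m}"]
        embedding_maps_update[OF assms(3)] False by simp
  qed
  finally show ?thesis .
qed

lemma card_adjacent_edges_le:
  assumes "is_graph G" "e \<in> edges G"
  shows "card {f \<in> edges G. e \<noteq> f \<and> e \<inter> f \<noteq> {}} \<le> 2 * max_degree G"
proof -
  obtain a b where ab: "e = {a, b}"
    using assms is_graph_card_edge card_2_iff by metis
  have degree_le: "card {f \<in> edges G. v \<in> f} \<le> max_degree G" if "v \<in> verts G" for v
    unfolding max_degree_def
  proof (rule Max_ge)
    show "finite (insert 0 ((\<lambda>v. card {e \<in> edges G. v \<in> e}) ` verts G))"
      using assms(1) by (simp add: is_graph_def)
  qed (use that in blast)
  have "a \<in> verts G" "b \<in> verts G"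
    using is_graph_edge_subset[OF assms] ab by auto
  then have "card {f \<in> edges G. a \<in> f} + card {f \<in> edges G. b \<in> f} \<le> 2 * max_degree G"
    using degree_le add_mono by (metis mult_2)
  moreover have "card {f \<in> edges G. e \<noteq> f \<and> e \<inter> f \<noteq> {}}
      \<le> card ({f \<in> edges G. a \<in> f} \<union> {f \<in> edges G. b \<in> f})"
    using ab finite_edges[OF assms(1)] by (intro card_mono) auto
  ultimately show ?thesis
    using card_Un_le le_trans by fastforce
qed

definition colliding_maps :: "graph \<Rightarrow> graph \<Rightarrow> graph \<Rightarrow> nat \<Rightarrow> (nat \<Rightarrow> nat) set" where
  "colliding_maps G S M m = (\<Union>e\<in>edges S. \<Union>f\<in>{f \<in> edges G. e \<noteq> f \<and> e \<inter> f \<noteq> {}}.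
     {\<phi> \<in> embedding_maps G S M m. \<phi> ` e = \<phi> ` f})"

definition surviving_maps :: "graph \<Rightarrow> graph \<Rightarrow> graph \<Rightarrow> nat \<Rightarrow> (nat \<Rightarrow> nat) set" where
  "surviving_maps G S M m = {\<phi> \<in> verts G \<rightarrow>\<^sub>E {0..<m}. edges S \<subseteq> pullback_edges G M \<phi>}"

lemma embedding_maps_Diff_colliding_maps:
  assumes "subgraph S G"
  shows "embedding_maps G S M m - colliding_maps G S M m \<subseteq> surviving_maps G S M m"
  using assms
  by (auto simp: subgraph_def colliding_maps_def embedding_maps_def surviving_maps_def
      pullback_edges_def)

lemma card_colliding_maps_le:
  assumes "is_graph G" "is_graph M" "subgraph S G"
  shows "m * card (colliding_maps G S M m)
    \<le> card (edges S) * (2 * max_degree G) * card (embedding_maps G S M m)"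
proof -
  let ?A = "embedding_maps G S M m"
  let ?adj = "\<lambda>e. {f \<in> edges G. e \<noteq> f \<and> e \<inter> f \<noteq> {}}"
  let ?collide = "\<lambda>e f. {\<phi> \<in> ?A. \<phi> ` e = \<phi> ` f}"
  have S: "is_graph S" "edges S \<subseteq> edges G"
    using assms(3) by (auto simp: subgraph_def)
  have "m * card (colliding_maps G S M m) \<le> m * (\<Sum>e\<in>edges S. \<Sum>f\<in>?adj e. card (?collide e f))"
    unfolding colliding_maps_def using finite_edges[OF S(1)] finite_edges[OF assms(1)]
    by (intro mult_le_mono2 order_trans[OF card_UN_le] sum_mono card_UN_le) auto
  also have "\<dots> = (\<Sum>e\<in>edges S. \<Sum>f\<in>?adj e. m * card (?collide e f))"
    by (simp add: sum_distrib_left)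
  also have "\<dots> \<le> (\<Sum>e\<in>edges S. card (?adj e) * card ?A)"
  proof (rule sum_mono)
    fix e assume "e \<in> edges S"
    then show "(\<Sum>f\<in>?adj e. m * card (?collide e f)) \<le> card (?adj e) * card ?A"
      using sum_bounded_above[of "?adj e" "\<lambda>f. m * card (?collide e f)" "card ?A"]
        card_edge_collisions_le[OF assms] by simp
  qed
  also have "\<dots> \<le> (\<Sum>e\<in>edges S. 2 * max_degree G * card ?A)"
    using card_adjacent_edges_le[OF assms(1)] S(2) by (intro sum_mono mult_le_mono1) auto
  finally show ?thesis
    by (simp add: ac_simps)
qed

lemma card_embedding_maps_le_surviving:
  assumes "is_graph G" "is_graph M" "subgraph S G" "isomorphic S H" "0 < m"
    and "4 * card (edges H) * max_degree G \<le> m"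
  shows "card (embedding_maps G S M m) \<le> 2 * card (surviving_maps G S M m)"
proof -
  let ?A = "embedding_maps G S M m" and ?B = "colliding_maps G S M m"
  have "card (edges S) = card (edges H)"
    using assms(3,4) isomorphic_card_edges by (auto simp: subgraph_def)
  then have "2 * (m * card ?B) \<le> 4 * card (edges H) * max_degree G * card ?A"
    using card_colliding_maps_le[OF assms(1-3)] by (simp add: ac_simps)
  also have "\<dots> \<le> m * card ?A"
    using assms(6) by (rule mult_le_mono1)
  finally have "2 * card ?B \<le> card ?A"
    using assms(5) by (simp add: ac_simps)
  moreover have "finite ?B"
    using finite_embedding_maps[OF assms(1)] by (rule rev_finite_subset) (auto simp: colliding_maps_def)
  then have "card ?A - card ?B \<le> card (?A - ?B)"
    by (rule diff_card_le_card_Diff)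
  moreover have "card (?A - ?B) \<le> card (surviving_maps G S M m)"
    using embedding_maps_Diff_colliding_maps[OF assms(3)] assms(1)
    by (intro card_mono) (simp_all add: surviving_maps_def is_graph_def finite_PiE)
  ultimately show ?thesis
    by linarith
qed

lemma card_surviving_maps_ge:
  assumes "is_graph G" "is_graph M" "verts M = {0..<m}" "0 < m"
    and "4 * card (edges H) * max_degree G \<le> m" "subgraph S G" "isomorphic S H"
  shows "count_copies H M * m ^ card (verts G)
    \<le> 2 * card (surviving_maps G S M m) * m ^ card (verts H)"
proof -
  have "is_graph S" "verts S \<subseteq> verts G"
    using assms(6) by (auto simp: subgraph_def)
  moreover have "card (verts S) = card (verts H)"
    using assms(7) by (rule isomorphic_card_verts)
  ultimately have "card (verts G) = card (verts G - verts S) + card (verts H)"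
    using assms(1) card_mono[of "verts G" "verts S"]
    by (simp add: is_graph_def card_Diff_subset finite_subset)
  then have "count_copies H M * m ^ card (verts G)
      = count_copies H M * m ^ card (verts G - verts S) * m ^ card (verts H)"
    by (simp add: power_add)
  also have "\<dots> \<le> card (embedding_maps G S M m) * m ^ card (verts H)"
    using card_embedding_maps_ge[OF assms(1,3,6,7)] by simp
  also have "\<dots> \<le> 2 * card (surviving_maps G S M m) * m ^ card (verts H)"
    using card_embedding_maps_le_surviving[OF assms(1,2,6,7,4,5)] by simp
  finally show ?thesis .
qed

lemma sum_card_swap:
  assumes "finite A" "finite B"
  shows "(\<Sum>a\<in>A. card {b \<in> B. P a b}) = (\<Sum>b\<in>B. card {a \<in> A. P a b})"
  using sum.swap_restrict[OF assms, of "\<lambda>_ _. 1::nat" P] by simp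

lemma exists_ge_average:
  fixes f :: "'a \<Rightarrow> nat"
  assumes "finite A" "A \<noteq> {}"
  obtains x where "x \<in> A" "sum f A \<le> card A * f x"
proof -
  have "Max (f ` A) \<in> f ` A"
    using assms by (intro Max_in) auto
  then obtain x where "x \<in> A" "f x = Max (f ` A)"
    by auto
  moreover from this have "sum f A \<le> card A * f x"
    using sum_bounded_above[of A f "f x"] assms(1) by simp
  ultimately show ?thesis
    using that by blast
qed

lemma card_surviving_copies_le:
  assumes "is_graph G"
  shows "card {S. subgraph S G \<and> isomorphic S H \<and> \<phi> \<in> surviving_maps G S M m}
    \<le> count_copies H (pullback_graph G M \<phi>)"
  unfolding count_copies_def
proof (intro card_mono finite_copies)
  show "is_graph (pullback_graph G M \<phi>)"
    using subgraph_pullback_graph[OF assms] by (simp add: subgraph_def)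
  show "{S. subgraph S G \<and> isomorphic S H \<and> \<phi> \<in> surviving_maps G S M m}
      \<subseteq> {S. subgraph S (pullback_graph G M \<phi>) \<and> isomorphic S H}"
    by (auto simp: subgraph_def pullback_graph_def surviving_maps_def)
qed

lemma copies_in_pullback_graph:
  assumes "is_graph G" "is_graph M" "verts M = {0..<m}" "0 < m"
    and "4 * card (edges H) * max_degree G \<le> m"
  obtains \<phi> where "\<phi> \<in> verts G \<rightarrow>\<^sub>E {0..<m}"
    "count_copies H G * count_copies H M
      \<le> 2 * m ^ card (verts H) * count_copies H (pullback_graph G M \<phi>)"
proof -
  let ?\<Phi> = "verts G \<rightarrow>\<^sub>E {0..<m}"
  let ?C = "{S. subgraph S G \<and> isomorphic S H}"
  let ?n = "card (verts G)" and ?h = "card (verts H)"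
  let ?N = "\<lambda>\<phi>. count_copies H (pullback_graph G M \<phi>)"
  have fin_\<Phi>: "finite ?\<Phi>" and card_\<Phi>: "card ?\<Phi> = m ^ ?n"
    using assms(1) by (simp_all add: is_graph_def finite_PiE card_PiE)
  have "?\<Phi> \<noteq> {}"
    using assms(4) by (simp add: PiE_eq_empty_iff)
  then obtain \<phi> where \<phi>: "\<phi> \<in> ?\<Phi>" "sum ?N ?\<Phi> \<le> card ?\<Phi> * ?N \<phi>"
    by (rule exists_ge_average[OF fin_\<Phi>])
  have "m ^ ?n * (count_copies H G * count_copies H M) = (\<Sum>S\<in>?C. count_copies H M * m ^ ?n)"
    by (simp add: count_copies_def)
  also have "\<dots> \<le> 2 * m ^ ?h * (\<Sum>S\<in>?C. card {\<psi> \<in> ?\<Phi>. \<psi> \<in> surviving_maps G S M m})"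
    using card_surviving_maps_ge[OF assms] unfolding sum_distrib_left
    by (intro sum_mono) (simp add: surviving_maps_def ac_simps)
  also have "\<dots> = 2 * m ^ ?h * (\<Sum>\<psi>\<in>?\<Phi>. card {S \<in> ?C. \<psi> \<in> surviving_maps G S M m})"
    by (simp only: sum_card_swap[OF finite_copies[OF assms(1)] fin_\<Phi>])
  also have "\<dots> \<le> 2 * m ^ ?h * sum ?N ?\<Phi>"
    using card_surviving_copies_le[OF assms(1)] by (intro mult_le_mono2 sum_mono) simp
  also have "\<dots> \<le> m ^ ?n * (2 * m ^ ?h * ?N \<phi>)"
    using \<phi>(2) card_\<Phi> by simp
  finally show ?thesis
    using that \<phi>(1) assms(4) by simp
qed

lemma free_subgraph_with_many_copies:
  assumes "is_graph G" "is_graph H" "\<forall>F\<in>\<F>. verts F \<noteq> {}"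
    and "4 * card (edges H) * max_degree G \<le> m" "0 < m \<or> verts H = {}"
  obtains G' where "subgraph G' G" "free \<F> G'"
    "count_copies H G * ex m H (local_family \<F>) \<le> 2 * m ^ card (verts H) * count_copies H G'"
proof (cases "ex m H (local_family \<F>) = 0")
  case True
  then show ?thesis
    using that subgraph_empty_graph[OF assms(1)] free_empty_graph[OF assms(3)] by simp
next
  case False
  then obtain M where M: "is_graph M" "verts M = {0..<m}" "free (local_family \<F>) M"
    "count_copies H M = ex m H (local_family \<F>)"
    using ex_attained by blast
  show ?thesis
  proof (cases "0 < m")
    case True
    then obtain \<phi> where \<phi>: "\<phi> \<in> verts G \<rightarrow>\<^sub>E {0..<m}" "count_copies H G * count_copies H M
        \<le> 2 * m ^ card (verts H) * count_copies H (pullback_graph G M \<phi>)"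
      using copies_in_pullback_graph[OF assms(1) M(1,2) _ assms(4)] by blast
    then have "\<phi> ` verts G \<subseteq> verts M"
      using M(2) by auto
    then show ?thesis
      using that[OF subgraph_pullback_graph[OF assms(1)] free_pullback_graph[OF M(1,3)]] \<phi>(2) M(4)
      by simp
  next
    case False
    then have "verts H = {}"
      using assms(5) by simp
    then have "count_copies H X = 1" if "is_graph X" for X
      using count_copies_empty_pattern[OF assms(2)] that by simp
    then have "count_copies H G = 1" "count_copies H M = 1" "count_copies H ({}, {}) = 1"
      using assms(1) M(1) by (simp_all add: is_graph_def)
    then show ?thesis
      using that[OF subgraph_empty_graph[OF assms(1)] free_empty_graph[OF assms(3)]] M(4)
        \<open>verts H = {}\<close> by simp
  qed
qed

theorem proposition2p3:
  fixes G H :: graph and \<F> :: "graph set" and m :: nat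
  assumes "is_graph G" and "is_graph H"
    and "\<forall>F\<in>\<F>. is_graph F \<and> verts F \<noteq> {}"
    and "m \<ge> 4 * card (edges H) * max_degree G"
  shows "\<exists>G'. subgraph G' G \<and> free \<F> G' \<and>
    real (count_copies H G') \<ge>
      1/2 * real (ex m H (local_family \<F>)) * (1 / real m ^ card (verts H)) * real (count_copies H G)"
proof -
  have nonempty: "\<forall>F\<in>\<F>. verts F \<noteq> {}"
    using assms(3) by blast
  show ?thesis
  proof (cases "m = 0 \<and> verts H \<noteq> {}")
    case True
    \<comment> \<open>the right-hand side vanishes, as 1 / 0 = 0\<close>
    then have "m = 0" "0 < card (verts H)"
      using assms(2) by (simp_all add: is_graph_def card_gt_0_iff)
    then show ?thesis
      using subgraph_empty_graph[OF assms(1)] free_empty_graph[OF nonempty]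
      by (intro exI[of _ "({}, {})"]) (simp add: zero_power)
  next
    case False
    then have "0 < m \<or> verts H = {}"
      by auto
    then obtain G' where G': "subgraph G' G" "free \<F> G'"
      "count_copies H G * ex m H (local_family \<F>) \<le> 2 * m ^ card (verts H) * count_copies H G'"
      by (rule free_subgraph_with_many_copies[OF assms(1,2) nonempty assms(4)])
    have "0 < real (m ^ card (verts H))"
      using \<open>0 < m \<or> verts H = {}\<close> by auto
    moreover have "real (count_copies H G * ex m H (local_family \<F>))
        \<le> real (2 * m ^ card (verts H) * count_copies H G')"
      using G'(3) by (simp only: of_nat_le_iff)
    ultimately show ?thesis
      using G'(1,2) by (intro exI[of _ G']) (simp add: field_simps)
  qed
qed

end
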